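(* Let $\phi$ be a strictly convex norm on $\mathbf{R}^n$ of class $\mathcal{C}^2$ on $\mathbf{R}^n\setminus\{0\}$, $K\subseteq\mathbf{R}^n$ closed, $\sigma>1$, and $K_\sigma=\{x:\rho^\phi_K(x)\ge\sigma\}\setminus K$. For $t\in\mathbf{R}$ let $h_t$ be the multivalued map $h_t(y)=ty+(1-t)\xi^\phi_K(y)=\{ty+(1-t)a:a\in\xi^\phi_K(y)\}$. Then for every $0<t<\sigma$, $h_t|K_\sigma$ is (single-valued and) a homeomorphism of $K_\sigma$ onto $K_{\sigma/t}$ with inverse $h_{1/t}|K_{\sigma/t}$.
   Context: A norm $\phi$ is strictly convex if $\phi(a+b)=\phi(a)+\phi(b)$ implies $\phi(b)a=\phi(a)b$. For closed $K$: $\delta^\phi_K(x)=\inf\{\phi(y-x):y\in K\}$; $\xi^\phi_K(x)=K\cap\{w:\phi(x-w)=\delta^\phi_K(x)\}$; $\rho^\phi_K(x)=\sup\bigl(\mathbf{R}\cap\{s:\delta^\phi_K(a+s(x-a))=s\,\delta^\phi_K(x)\}\bigr)$ for any $a\in\xi^\phi_K(x)$ (independent of the choice of $a$). For any $\tau\ge1$, $K_\tau=\{x:\rho^\phi_K(x)\ge\tau\}\setminus K$. *)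

theory Defs
  imports "HOL-Analysis.Analysis"
begin

definition is_norm :: "('a::real_vector \<Rightarrow> real) \<Rightarrow> bool" where
  "is_norm \<phi> \<longleftrightarrow> (\<forall>x. 0 \<le> \<phi> x) \<and> (\<forall>x. \<phi> x = 0 \<longleftrightarrow> x = 0)
     \<and> (\<forall>c x. \<phi> (c *\<^sub>R x) = \<bar>c\<bar> * \<phi> x)
     \<and> (\<forall>x y. \<phi> (x + y) \<le> \<phi> x + \<phi> y)"

definition strictly_convex_norm :: "('a::real_vector \<Rightarrow> real) \<Rightarrow> bool" where
  "strictly_convex_norm \<phi> \<longleftrightarrow> is_norm \<phi> \<and>
     (\<forall>a b. \<phi> (a + b) = \<phi> a + \<phi> b \<longrightarrow> \<phi> b *\<^sub>R a = \<phi> a *\<^sub>R b)"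

definition C2_off_origin :: "('a::euclidean_space \<Rightarrow> real) \<Rightarrow> bool" where
  "C2_off_origin \<phi> \<longleftrightarrow> (\<exists>D1 :: 'a \<Rightarrow> ('a \<Rightarrow>\<^sub>L real). \<exists>D2 :: 'a \<Rightarrow> ('a \<Rightarrow>\<^sub>L ('a \<Rightarrow>\<^sub>L real)).
      (\<forall>x. x \<noteq> 0 \<longrightarrow> (\<phi> has_derivative blinfun_apply (D1 x)) (at x))
    \<and> (\<forall>x. x \<noteq> 0 \<longrightarrow> (D1 has_derivative blinfun_apply (D2 x)) (at x))
    \<and> continuous_on (- {0}) D2)"

definition delta :: "('a::real_vector \<Rightarrow> real) \<Rightarrow> 'a set \<Rightarrow> 'a \<Rightarrow> real" where
  "delta \<phi> K x = Inf {\<phi> (y - x) | y. y \<in> K}"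

definition xi :: "('a::real_vector \<Rightarrow> real) \<Rightarrow> 'a set \<Rightarrow> 'a \<Rightarrow> 'a set" where
  "xi \<phi> K x = {w \<in> K. \<phi> (x - w) = delta \<phi> K x}"

text \<open>Sup over the reals, taken in the extended reals (value may be +infinity).
  Taken over all admissible a in xi (the value is independent of a).\<close>
definition rho :: "('a::real_vector \<Rightarrow> real) \<Rightarrow> 'a set \<Rightarrow> 'a \<Rightarrow> ereal" where
  "rho \<phi> K x = Sup (ereal ` {s. \<exists>a \<in> xi \<phi> K x.
      delta \<phi> K (a + s *\<^sub>R (x - a)) = s * delta \<phi> K x})"

definition Kt :: "('a::real_vector \<Rightarrow> real) \<Rightarrow> 'a set \<Rightarrow> real \<Rightarrow> 'a set" where
  "Kt \<phi> K \<tau> = {x. rho \<phi> K x \<ge> ereal \<tau>} - K"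

definition hmap :: "('a::real_vector \<Rightarrow> real) \<Rightarrow> 'a set \<Rightarrow> real \<Rightarrow> 'a \<Rightarrow> 'a set" where
  "hmap \<phi> K t y = {t *\<^sub>R y + (1 - t) *\<^sub>R a | a. a \<in> xi \<phi> K y}"

end

(*
  Let y be in K_sigma with sigma > 1 and let a be a nearest point of y. Then delta is linear
  along the ray from a through y up to some parameter s > 1, and equality in the triangle
  inequality, via strict convexity, makes a the unique nearest point of y. The point
  h_t(y) = a + t (y - a) lies on the same ray: a is still a nearest point of it, and delta is
  linear on the ray with all parameters divided by t, so h_t(y) lies in K_(sigma/t) and again
  has a as its unique nearest point. Hence h_t and h_(1/t) are mutually inverse, and both are
  continuous because a nearest-point map is continuous wherever it is single-valued, by a
  compactness argument.
*)

theory Submission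
  imports Defs
begin

lemma is_norm_nonneg: "is_norm \<phi> \<Longrightarrow> 0 \<le> \<phi> x"
  unfolding is_norm_def by blast

lemma is_norm_eq_0_iff: "is_norm \<phi> \<Longrightarrow> \<phi> x = 0 \<longleftrightarrow> x = 0"
  unfolding is_norm_def by blast

lemma is_norm_scaleR: "is_norm \<phi> \<Longrightarrow> \<phi> (c *\<^sub>R x) = \<bar>c\<bar> * \<phi> x"
  unfolding is_norm_def by blast

lemma is_norm_triangle: "is_norm \<phi> \<Longrightarrow> \<phi> (x + y) \<le> \<phi> x + \<phi> y"
  unfolding is_norm_def by blast

lemma is_norm_zero: "is_norm \<phi> \<Longrightarrow> \<phi> 0 = 0"
  by (simp add: is_norm_eq_0_iff)

lemma is_norm_minus_commute:
  assumes "is_norm \<phi>" shows "\<phi> (x - y) = \<phi> (y - x)"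
  using is_norm_scaleR[OF assms, of "-1" "x - y"] by simp

lemma is_norm_triangle_diff:
  assumes "is_norm \<phi>" shows "\<phi> (x - z) \<le> \<phi> (x - y) + \<phi> (y - z)"
  using is_norm_triangle[OF assms, of "x - y" "y - z"] by simp

lemma strictly_convex_norm_is_norm: "strictly_convex_norm \<phi> \<Longrightarrow> is_norm \<phi>"
  unfolding strictly_convex_norm_def by blast

lemma is_norm_convex_on:
  assumes "is_norm \<phi>" shows "convex_on UNIV \<phi>"
proof (rule convex_onI)
  fix x y :: 'a and u :: real
  assume "0 < u" "u < 1"
  have "\<phi> ((1 - u) *\<^sub>R x + u *\<^sub>R y) \<le> \<phi> ((1 - u) *\<^sub>R x) + \<phi> (u *\<^sub>R y)"
    by (rule is_norm_triangle[OF assms])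
  also have "\<dots> = (1 - u) * \<phi> x + u * \<phi> y"
    using is_norm_scaleR[OF assms] \<open>0 < u\<close> \<open>u < 1\<close> by simp
  finally show "\<phi> ((1 - u) *\<^sub>R x + u *\<^sub>R y) \<le> (1 - u) * \<phi> x + u * \<phi> y" .
qed simp

lemma isCont_is_norm:
  fixes \<phi> :: "'a::euclidean_space \<Rightarrow> real"
  assumes "is_norm \<phi>" shows "isCont \<phi> x"
  using convex_on_continuous[OF open_UNIV is_norm_convex_on[OF assms]]
  by (simp add: continuous_on_eq_continuous_at)

lemma is_norm_ge_norm:
  fixes \<phi> :: "'a::euclidean_space \<Rightarrow> real"
  assumes "is_norm \<phi>" obtains c where "c > 0" "\<And>x. c * norm x \<le> \<phi> x"
proof -
  obtain b :: 'a where "b \<in> sphere 0 1" using vector_choose_size[of 1] by auto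
  moreover have "continuous_on (sphere 0 1) \<phi>"
    using isCont_is_norm[OF assms] by (simp add: continuous_at_imp_continuous_on)
  ultimately obtain u where u: "u \<in> sphere 0 1" and umin: "\<And>y. y \<in> sphere 0 1 \<Longrightarrow> \<phi> u \<le> \<phi> y"
    using continuous_attains_inf[OF compact_sphere] by blast
  have "\<phi> u > 0"
    using u is_norm_nonneg[OF assms, of u] is_norm_eq_0_iff[OF assms, of u] by auto
  moreover have "\<phi> u * norm x \<le> \<phi> x" for x
  proof (cases "x = 0")
    case False
    then have "\<phi> u \<le> \<phi> ((1 / norm x) *\<^sub>R x)" by (intro umin) simp
    also have "\<dots> = \<phi> x / norm x" using is_norm_scaleR[OF assms] by simp
    finally show ?thesis using False by (simp add: field_simps)
  qed (simp add: is_norm_zero[OF assms])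
  ultimately show ?thesis by (rule that)
qed

lemma delta_le:
  assumes "is_norm \<phi>" "y \<in> K" shows "delta \<phi> K x \<le> \<phi> (y - x)"
  unfolding delta_def
  by (rule cInf_lower) (use assms is_norm_nonneg[OF assms(1)] in \<open>auto intro!: bdd_belowI[where m=0]\<close>)

lemma delta_greatest:
  assumes "K \<noteq> {}" "\<And>y. y \<in> K \<Longrightarrow> m \<le> \<phi> (y - x)" shows "m \<le> delta \<phi> K x"
  unfolding delta_def by (rule cInf_greatest) (use assms in auto)

lemma delta_le_delta_add:
  assumes "is_norm \<phi>" "K \<noteq> {}" shows "delta \<phi> K x \<le> delta \<phi> K y + \<phi> (y - x)"
proof -
  have "delta \<phi> K x - \<phi> (y - x) \<le> delta \<phi> K y"
  proof (rule delta_greatest[OF assms(2)])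
    fix w assume "w \<in> K"
    have "delta \<phi> K x \<le> \<phi> (w - y) + \<phi> (y - x)"
      using delta_le[OF assms(1) \<open>w \<in> K\<close>] is_norm_triangle_diff[OF assms(1)] by (rule order_trans)
    then show "delta \<phi> K x - \<phi> (y - x) \<le> \<phi> (w - y)" by simp
  qed
  then show ?thesis by simp
qed

lemma isCont_delta:
  fixes \<phi> :: "'a::euclidean_space \<Rightarrow> real"
  assumes "is_norm \<phi>" "K \<noteq> {}" shows "isCont (delta \<phi> K) x"
proof -
  have "((\<lambda>y. \<phi> (y - x)) \<longlongrightarrow> \<phi> (x - x)) (at x)"
    by (intro isCont_tendsto_compose[OF isCont_is_norm[OF assms(1)]] tendsto_intros)
  then have lim: "((\<lambda>y. \<phi> (y - x)) \<longlongrightarrow> 0) (at x)" by (simp add: is_norm_zero[OF assms(1)])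
  have bound: "norm (delta \<phi> K y - delta \<phi> K x) \<le> \<phi> (y - x)" for y
    using delta_le_delta_add[OF assms, of x y] delta_le_delta_add[OF assms, of y x]
      is_norm_minus_commute[OF assms(1), of y x] unfolding real_norm_def by linarith
  have "((\<lambda>y. delta \<phi> K y - delta \<phi> K x) \<longlongrightarrow> 0) (at x)"
    by (rule Lim_null_comparison[OF always_eventually[OF allI[OF bound]] lim])
  then show ?thesis unfolding isCont_def by (rule LIM_zero_cancel)
qed

lemma xiD:
  assumes "a \<in> xi \<phi> K x" shows "a \<in> K" "\<phi> (x - a) = delta \<phi> K x"
  using assms unfolding xi_def by auto

lemma delta_ray_eq_downward:
  assumes N: "is_norm \<phi>" and a: "a \<in> xi \<phi> K x"
    and eq: "delta \<phi> K (a + s *\<^sub>R (x - a)) = s * delta \<phi> K x" and "0 \<le> s'" "s' \<le> s"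
  shows "delta \<phi> K (a + s' *\<^sub>R (x - a)) = s' * delta \<phi> K x"
proof -
  have aK: "a \<in> K" and ad: "\<phi> (x - a) = delta \<phi> K x" using xiD[OF a] by auto
  then have Kne: "K \<noteq> {}" by auto
  have "delta \<phi> K (a + s' *\<^sub>R (x - a)) \<le> \<phi> ((- s') *\<^sub>R (x - a))"
    using delta_le[OF N aK, of "a + s' *\<^sub>R (x - a)"] by simp
  also have "\<dots> = s' * delta \<phi> K x" using is_norm_scaleR[OF N, of "- s'"] \<open>0 \<le> s'\<close> ad by simp
  finally have le: "delta \<phi> K (a + s' *\<^sub>R (x - a)) \<le> s' * delta \<phi> K x" .
  have "s * delta \<phi> K x \<le> delta \<phi> K (a + s' *\<^sub>R (x - a)) + \<phi> ((s' - s) *\<^sub>R (x - a))"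
    using delta_le_delta_add[OF N Kne, of "a + s *\<^sub>R (x - a)" "a + s' *\<^sub>R (x - a)"] eq
    by (simp add: algebra_simps)
  also have "\<phi> ((s' - s) *\<^sub>R (x - a)) = (s - s') * delta \<phi> K x"
    using is_norm_scaleR[OF N] \<open>s' \<le> s\<close> ad by simp
  finally have "s' * delta \<phi> K x \<le> delta \<phi> K (a + s' *\<^sub>R (x - a))"
    by (simp add: left_diff_distrib)
  with le show ?thesis by linarith
qed

lemma delta_pos_if_xi:
  assumes "is_norm \<phi>" "a \<in> xi \<phi> K x" "x \<notin> K" shows "0 < delta \<phi> K x"
  using xiD[OF assms(2)] assms is_norm_nonneg[OF assms(1), of "x - a"]
    is_norm_eq_0_iff[OF assms(1), of "x - a"] by fastforce

lemma xi_eq_singleton_if_ray: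
  assumes sc: "strictly_convex_norm \<phi>" and "x \<notin> K" "a \<in> xi \<phi> K x" "s > 1"
    and eq: "delta \<phi> K (a + s *\<^sub>R (x - a)) = s * delta \<phi> K x"
  shows "xi \<phi> K x = {a}"
proof -
  have N: "is_norm \<phi>" using sc by (rule strictly_convex_norm_is_norm)
  define d where "d = delta \<phi> K x"
  have "d > 0" unfolding d_def by (rule delta_pos_if_xi[OF N assms(3,2)])
  define z where "z = a + s *\<^sub>R (x - a)"
  have zx: "z - x = (s - 1) *\<^sub>R (x - a)" unfolding z_def by (simp add: algebra_simps)
  have \<phi>zx: "\<phi> (z - x) = (s - 1) * d"
    unfolding zx d_def using is_norm_scaleR[OF N] xiD(2)[OF assms(3)] \<open>s > 1\<close> by simp
  have "b = a" if b: "b \<in> xi \<phi> K x" for b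
  proof -
    have \<phi>xb: "\<phi> (x - b) = d" using xiD(2)[OF b] unfolding d_def .
    have "s * d \<le> \<phi> (b - z)"
      using eq delta_le[OF N xiD(1)[OF b], of z] unfolding z_def d_def by simp
    also have "\<dots> = \<phi> ((z - x) + (x - b))" using is_norm_minus_commute[OF N, of b z] by simp
    finally have "s * d \<le> \<phi> ((z - x) + (x - b))" .
    moreover have "\<phi> ((z - x) + (x - b)) \<le> \<phi> (z - x) + \<phi> (x - b)" by (rule is_norm_triangle[OF N])
    moreover have "\<phi> (z - x) + \<phi> (x - b) = s * d" unfolding \<phi>zx \<phi>xb by (simp add: algebra_simps)
    ultimately have "\<phi> ((z - x) + (x - b)) = \<phi> (z - x) + \<phi> (x - b)" by linarith
    then have "\<phi> (x - b) *\<^sub>R (z - x) = \<phi> (z - x) *\<^sub>R (x - b)"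
      using sc unfolding strictly_convex_norm_def by blast
    then have "d *\<^sub>R (z - x) = ((s - 1) * d) *\<^sub>R (x - b)" by (simp only: \<phi>zx \<phi>xb)
    then have "(d * (s - 1)) *\<^sub>R (x - a) = (d * (s - 1)) *\<^sub>R (x - b)"
      unfolding zx by (simp add: mult.commute)
    moreover have "d * (s - 1) \<noteq> 0" using \<open>d > 0\<close> \<open>s > 1\<close> by simp
    ultimately show "b = a" by simp
  qed
  then show ?thesis using assms(3) by blast
qed

lemma ereal_le_rho_iff:
  "ereal \<sigma> \<le> rho \<phi> K y \<longleftrightarrow>
     (\<forall>r<\<sigma>. \<exists>a\<in>xi \<phi> K y. \<exists>s>r. delta \<phi> K (a + s *\<^sub>R (y - a)) = s * delta \<phi> K y)"
proof -
  let ?S = "{s. \<exists>a\<in>xi \<phi> K y. delta \<phi> K (a + s *\<^sub>R (y - a)) = s * delta \<phi> K y}"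
  have "ereal \<sigma> \<le> rho \<phi> K y \<longleftrightarrow> (\<forall>w<ereal \<sigma>. \<exists>s\<in>?S. w < ereal s)"
    unfolding rho_def le_Sup_iff by blast
  also have "\<dots> \<longleftrightarrow> (\<forall>r<\<sigma>. \<exists>s\<in>?S. r < s)"
  proof (intro iffI allI impI)
    fix r assume "\<forall>w<ereal \<sigma>. \<exists>s\<in>?S. w < ereal s" "r < \<sigma>"
    then obtain s where "s \<in> ?S" "ereal r < ereal s" by (meson less_ereal.simps(1))
    then show "\<exists>s\<in>?S. r < s" by auto
  next
    fix w assume H: "\<forall>r<\<sigma>. \<exists>s\<in>?S. r < s" and "w < ereal \<sigma>"
    then obtain r where "w < ereal r" "r < \<sigma>" using ereal_dense2 by force
    then show "\<exists>s\<in>?S. w < ereal s" using H by (meson less_ereal.simps(1) less_trans)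
  qed
  finally show ?thesis by blast
qed

lemma xi_ray_point:
  assumes N: "is_norm \<phi>" and a: "a \<in> xi \<phi> K y"
    and eq: "delta \<phi> K (a + s *\<^sub>R (y - a)) = s * delta \<phi> K y" and "0 \<le> t" "t \<le> s"
  shows "a \<in> xi \<phi> K (a + t *\<^sub>R (y - a))"
proof -
  have "\<phi> (a + t *\<^sub>R (y - a) - a) = t * delta \<phi> K y"
    using is_norm_scaleR[OF N] xiD(2)[OF a] \<open>0 \<le> t\<close> by simp
  also have "\<dots> = delta \<phi> K (a + t *\<^sub>R (y - a))"
    using delta_ray_eq_downward[OF N a eq \<open>0 \<le> t\<close> \<open>t \<le> s\<close>] by simp
  finally show ?thesis using xiD(1)[OF a] unfolding xi_def by simp
qed

lemma delta_ray_rescale: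
  assumes "delta \<phi> K (a + t *\<^sub>R (y - a)) = t * delta \<phi> K y"
  shows "delta \<phi> K (a + u *\<^sub>R (a + t *\<^sub>R (y - a) - a)) = u * delta \<phi> K (a + t *\<^sub>R (y - a))
    \<longleftrightarrow> delta \<phi> K (a + (u * t) *\<^sub>R (y - a)) = (u * t) * delta \<phi> K y"
  using assms by (simp add: ac_simps)

lemma ereal_le_rho_ray_point:
  assumes rho: "ereal \<sigma> \<le> rho \<phi> K y" and "xi \<phi> K y = {a}" and "a \<in> xi \<phi> K (a + t *\<^sub>R (y - a))"
    and dz: "delta \<phi> K (a + t *\<^sub>R (y - a)) = t * delta \<phi> K y" and "0 < t"
  shows "ereal (\<sigma> / t) \<le> rho \<phi> K (a + t *\<^sub>R (y - a))"
  unfolding ereal_le_rho_iff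
proof (intro allI impI)
  fix r assume "r < \<sigma> / t"
  then have "r * t < \<sigma>" using \<open>0 < t\<close> by (simp add: field_simps)
  then obtain a' s where "a' \<in> xi \<phi> K y" and "s > r * t"
    and "delta \<phi> K (a' + s *\<^sub>R (y - a')) = s * delta \<phi> K y"
    using rho unfolding ereal_le_rho_iff by blast
  moreover from this have "a' = a" using \<open>xi \<phi> K y = {a}\<close> by simp
  ultimately have "r < s / t"
    and "delta \<phi> K (a + (s / t) *\<^sub>R (a + t *\<^sub>R (y - a) - a)) = s / t * delta \<phi> K (a + t *\<^sub>R (y - a))"
    using delta_ray_rescale[OF dz, of "s / t"] \<open>0 < t\<close> by (simp_all add: field_simps)
  then show "\<exists>b\<in>xi \<phi> K (a + t *\<^sub>R (y - a)). \<exists>s>r.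
      delta \<phi> K (b + s *\<^sub>R (a + t *\<^sub>R (y - a) - b)) = s * delta \<phi> K (a + t *\<^sub>R (y - a))"
    using \<open>a \<in> xi \<phi> K (a + t *\<^sub>R (y - a))\<close> by blast
qed

lemma homothety_mem_Kt:
  assumes sc: "strictly_convex_norm \<phi>" and "\<sigma> > 1" "0 < t" "t < \<sigma>" and y: "y \<in> Kt \<phi> K \<sigma>"
  obtains a where "xi \<phi> K y = {a}" "t *\<^sub>R y + (1 - t) *\<^sub>R a \<in> Kt \<phi> K (\<sigma> / t)"
    "xi \<phi> K (t *\<^sub>R y + (1 - t) *\<^sub>R a) = {a}"
proof -
  have N: "is_norm \<phi>" using sc by (rule strictly_convex_norm_is_norm)
  have yK: "y \<notin> K" and rho: "ereal \<sigma> \<le> rho \<phi> K y" using y unfolding Kt_def by auto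
  obtain a s where a: "a \<in> xi \<phi> K y" and s: "s > max 1 t"
    and eq: "delta \<phi> K (a + s *\<^sub>R (y - a)) = s * delta \<phi> K y"
    using rho assms unfolding ereal_le_rho_iff by (meson max_less_iff_conj)
  have xiy: "xi \<phi> K y = {a}" by (rule xi_eq_singleton_if_ray[OF sc yK a _ eq]) (use s in auto)
  define z where "z = a + t *\<^sub>R (y - a)"
  have z_eq: "t *\<^sub>R y + (1 - t) *\<^sub>R a = z" unfolding z_def by (simp add: algebra_simps)
  have dz: "delta \<phi> K z = t * delta \<phi> K y"
    unfolding z_def by (rule delta_ray_eq_downward[OF N a eq]) (use s \<open>0 < t\<close> in auto)
  have az: "a \<in> xi \<phi> K z" unfolding z_def by (rule xi_ray_point[OF N a eq]) (use s \<open>0 < t\<close> in auto)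
  have zK: "z \<notin> K"
  proof
    assume "z \<in> K"
    then have "delta \<phi> K z \<le> 0" using delta_le[OF N, of z K z] is_norm_zero[OF N] by simp
    moreover have "0 < t * delta \<phi> K y" using delta_pos_if_xi[OF N a yK] \<open>0 < t\<close> by simp
    ultimately show False using dz by simp
  qed
  have xiz: "xi \<phi> K z = {a}"
  proof (rule xi_eq_singleton_if_ray[OF sc zK az])
    show "1 < s / t" using s \<open>0 < t\<close> by (simp add: field_simps)
    show "delta \<phi> K (a + (s / t) *\<^sub>R (z - a)) = s / t * delta \<phi> K z"
      using delta_ray_rescale[OF dz[unfolded z_def], of "s / t"] eq \<open>0 < t\<close> by (simp add: z_def)
  qed
  have "z \<in> Kt \<phi> K (\<sigma> / t)"
    using ereal_le_rho_ray_point[OF rho xiy az[unfolded z_def] dz[unfolded z_def] \<open>0 < t\<close>] zK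
    unfolding Kt_def z_def by simp
  from xiy this xiz show ?thesis unfolding z_eq[symmetric] by (rule that)
qed

lemma LIMSEQ_if_unique_subseq_limit:
  fixes x :: "nat \<Rightarrow> 'a::metric_space"
  assumes "compact S" "\<And>n. x n \<in> S"
    and unique: "\<And>r l. strict_mono r \<Longrightarrow> (x \<circ> r) \<longlonglongrightarrow> l \<Longrightarrow> l = a"
  shows "x \<longlonglongrightarrow> a"
proof (rule ccontr)
  assume "\<not> x \<longlonglongrightarrow> a"
  then obtain e where "e > 0" "\<not> eventually (\<lambda>n. dist (x n) a < e) sequentially"
    unfolding tendsto_iff by blast
  then have "infinite {n. \<not> dist (x n) a < e}"
    unfolding cofinite_eq_sequentially[symmetric] eventually_cofinite by simp
  then obtain r :: "nat \<Rightarrow> nat" where r: "strict_mono r" "\<And>n. \<not> dist (x (r n)) a < e"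
    using infinite_enumerate by blast
  have "\<forall>n. (x \<circ> r) n \<in> S" using assms(2) by simp
  then obtain l q where "l \<in> S" and q: "strict_mono (q :: nat \<Rightarrow> nat)" and lim: "(x \<circ> r \<circ> q) \<longlonglongrightarrow> l"
    by (rule seq_compactE[OF compact_imp_seq_compact[OF \<open>compact S\<close>]])
  have "l = a" using unique[OF strict_mono_o[OF r(1) q]] lim by (simp add: o_assoc)
  then have "eventually (\<lambda>n. dist (x (r (q n))) a < e) sequentially"
    using lim \<open>e > 0\<close> by (simp add: tendsto_iff)
  then show False using r(2) by (auto simp: eventually_sequentially)
qed

text \<open>An arbitrary nearest point; it is only used where \<open>xi \<phi> K y\<close> is a singleton.\<close>

definition nearest :: "('a::real_vector \<Rightarrow> real) \<Rightarrow> 'a set \<Rightarrow> 'a \<Rightarrow> 'a" where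
  "nearest \<phi> K y = (SOME a. a \<in> xi \<phi> K y)"

lemma nearest_eq: "xi \<phi> K y = {a} \<Longrightarrow> nearest \<phi> K y = a"
  unfolding nearest_def by simp

lemma bounded_nearest_points:
  fixes \<phi> :: "'a::euclidean_space \<Rightarrow> real"
  assumes N: "is_norm \<phi>" and "u \<longlonglongrightarrow> a" and p: "\<And>n. p n \<in> xi \<phi> K (u n)"
  shows "bounded (range p)"
proof -
  have "K \<noteq> {}" using xiD(1)[OF p] by blast
  obtain c where c: "c > 0" "\<And>x. c * norm x \<le> \<phi> x" using is_norm_ge_norm[OF N] by blast
  have "(\<lambda>n. delta \<phi> K (u n)) \<longlonglongrightarrow> delta \<phi> K a"
    by (rule isCont_tendsto_compose[OF isCont_delta[OF N \<open>K \<noteq> {}\<close>] \<open>u \<longlonglongrightarrow> a\<close>])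
  then obtain D where D: "\<And>n. norm (delta \<phi> K (u n)) \<le> D"
    by (meson BseqE convergentI convergent_imp_Bseq)
  obtain B where B: "\<And>n. norm (u n) \<le> B"
    using \<open>u \<longlonglongrightarrow> a\<close> by (meson BseqE convergentI convergent_imp_Bseq)
  have "norm (p n) \<le> B + D / c" for n
  proof -
    have "c * norm (u n - p n) \<le> D" using c(2)[of "u n - p n"] xiD(2)[OF p] D[of n] by simp
    then have "norm (u n - p n) \<le> D / c" using c(1) by (simp add: field_simps)
    then show ?thesis using norm_triangle_ineq4[of "u n" "u n - p n"] B[of n] by simp
  qed
  then show ?thesis unfolding bounded_iff by blast
qed

lemma continuous_on_nearest:
  fixes \<phi> :: "'a::euclidean_space \<Rightarrow> real"
  assumes N: "is_norm \<phi>" and "closed K" and A: "\<And>y. y \<in> A \<Longrightarrow> xi \<phi> K y = {nearest \<phi> K y}"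
  shows "continuous_on A (nearest \<phi> K)"
proof (rule continuous_on_sequentiallyI)
  fix u a assume uA: "\<forall>n. u n \<in> A" and "a \<in> A" and ua: "u \<longlonglongrightarrow> a"
  let ?p = "nearest \<phi> K"
  have pu: "?p (u n) \<in> xi \<phi> K (u n)" for n using A uA by auto
  then have "K \<noteq> {}" using xiD(1) by blast
  have "compact (closure (range (\<lambda>n. ?p (u n))))"
    using bounded_nearest_points[OF N ua pu] compact_closure by blast
  then show "(\<lambda>n. ?p (u n)) \<longlonglongrightarrow> ?p a"
  proof (rule LIMSEQ_if_unique_subseq_limit)
    show "?p (u n) \<in> closure (range (\<lambda>n. ?p (u n)))" for n
      by (meson closure_subset rangeI subsetD)
    fix r l assume "strict_mono r" and pl: "((\<lambda>n. ?p (u n)) \<circ> r) \<longlonglongrightarrow> l"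
    have ur: "(\<lambda>n. u (r n)) \<longlonglongrightarrow> a"
      using LIMSEQ_subseq_LIMSEQ[OF ua \<open>strict_mono r\<close>] by (simp add: o_def)
    have pl': "(\<lambda>n. ?p (u (r n))) \<longlonglongrightarrow> l" using pl by (simp add: o_def)
    have "(\<lambda>n. delta \<phi> K (u (r n))) \<longlonglongrightarrow> \<phi> (a - l)"
      using isCont_tendsto_compose[OF isCont_is_norm[OF N] tendsto_diff[OF ur pl']]
      by (simp only: xiD(2)[OF pu])
    then have "\<phi> (a - l) = delta \<phi> K a"
      using isCont_tendsto_compose[OF isCont_delta[OF N \<open>K \<noteq> {}\<close>] ur] by (rule LIMSEQ_unique)
    moreover have "l \<in> K" using closed_sequentially[OF \<open>closed K\<close> _ pl] xiD(1)[OF pu] by auto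
    ultimately have "l \<in> xi \<phi> K a" unfolding xi_def by simp
    then show "l = ?p a" using A[OF \<open>a \<in> A\<close>] by simp
  qed
qed

definition hmap_fun :: "('a::real_vector \<Rightarrow> real) \<Rightarrow> 'a set \<Rightarrow> real \<Rightarrow> 'a \<Rightarrow> 'a" where
  "hmap_fun \<phi> K t y = t *\<^sub>R y + (1 - t) *\<^sub>R nearest \<phi> K y"

lemma hmap_eq_singleton: "xi \<phi> K y = {a} \<Longrightarrow> hmap \<phi> K t y = {t *\<^sub>R y + (1 - t) *\<^sub>R a}"
  unfolding hmap_def by simp

lemma hmap_fun_mem_Kt:
  assumes "strictly_convex_norm \<phi>" "\<sigma> > 1" "0 < t" "t < \<sigma>" "y \<in> Kt \<phi> K \<sigma>"
  shows "xi \<phi> K y = {nearest \<phi> K y}" "hmap_fun \<phi> K t y \<in> Kt \<phi> K (\<sigma> / t)"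
    "nearest \<phi> K (hmap_fun \<phi> K t y) = nearest \<phi> K y"
  using homothety_mem_Kt[OF assms] nearest_eq unfolding hmap_fun_def by metis+

lemma homeomorphism_hmap_fun:
  fixes \<phi> :: "'a::euclidean_space \<Rightarrow> real"
  assumes sc: "strictly_convex_norm \<phi>" and "closed K" "\<sigma> > 1" "0 < t" "t < \<sigma>"
  shows "homeomorphism (Kt \<phi> K \<sigma>) (Kt \<phi> K (\<sigma> / t)) (hmap_fun \<phi> K t) (hmap_fun \<phi> K (1 / t))"
proof -
  have N: "is_norm \<phi>" using sc by (rule strictly_convex_norm_is_norm)
  note fwd = hmap_fun_mem_Kt[OF sc \<open>\<sigma> > 1\<close> \<open>0 < t\<close> \<open>t < \<sigma>\<close>]
  have inv: "\<sigma> / t > 1" "0 < 1 / t" "1 / t < \<sigma> / t" using assms by (simp_all add: field_simps)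
  have "\<sigma> / t / (1 / t) = \<sigma>" using \<open>0 < t\<close> by simp
  note bwd = hmap_fun_mem_Kt[OF sc inv, unfolded this]
  have cont: "continuous_on A (hmap_fun \<phi> K s)" if "\<And>y. y \<in> A \<Longrightarrow> xi \<phi> K y = {nearest \<phi> K y}" for A s
    unfolding hmap_fun_def
    by (intro continuous_intros continuous_on_nearest[OF N \<open>closed K\<close>] that)
  show ?thesis
  proof (rule homeomorphismI)
    show "continuous_on (Kt \<phi> K \<sigma>) (hmap_fun \<phi> K t)" by (rule cont) (rule fwd(1))
    show "continuous_on (Kt \<phi> K (\<sigma> / t)) (hmap_fun \<phi> K (1 / t))" by (rule cont) (rule bwd(1))
    show "hmap_fun \<phi> K t ` Kt \<phi> K \<sigma> \<subseteq> Kt \<phi> K (\<sigma> / t)" using fwd(2) by blast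
    show "hmap_fun \<phi> K (1 / t) ` Kt \<phi> K (\<sigma> / t) \<subseteq> Kt \<phi> K \<sigma>" using bwd(2) by blast
    show "hmap_fun \<phi> K (1 / t) (hmap_fun \<phi> K t y) = y" if "y \<in> Kt \<phi> K \<sigma>" for y
      using fwd(3)[OF that] \<open>0 < t\<close> unfolding hmap_fun_def by (simp add: algebra_simps)
    show "hmap_fun \<phi> K t (hmap_fun \<phi> K (1 / t) y) = y" if "y \<in> Kt \<phi> K (\<sigma> / t)" for y
      using bwd(3)[OF that] \<open>0 < t\<close> unfolding hmap_fun_def by (simp add: algebra_simps)
  qed
qed

theorem lemma2p34:
  fixes \<phi> :: "real ^ 'n \<Rightarrow> real" and K :: "(real ^ 'n) set" and \<sigma> t :: real
  assumes "strictly_convex_norm \<phi>"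
    and "C2_off_origin \<phi>"
    and "closed K"
    and "\<sigma> > 1"
    and "0 < t" and "t < \<sigma>"
  shows "\<exists>f g. (\<forall>y \<in> Kt \<phi> K \<sigma>. hmap \<phi> K t y = {f y})
             \<and> (\<forall>y \<in> Kt \<phi> K (\<sigma> / t). hmap \<phi> K (1 / t) y = {g y})
             \<and> homeomorphism (Kt \<phi> K \<sigma>) (Kt \<phi> K (\<sigma> / t)) f g"
proof (intro exI conjI ballI)
  have "\<sigma> / t > 1" "0 < 1 / t" "1 / t < \<sigma> / t" using assms by (simp_all add: field_simps)
  show "hmap \<phi> K t y = {hmap_fun \<phi> K t y}" if "y \<in> Kt \<phi> K \<sigma>" for y
    using hmap_fun_mem_Kt(1)[OF assms(1,4-6) that] unfolding hmap_fun_def by (rule hmap_eq_singleton)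
  show "hmap \<phi> K (1 / t) y = {hmap_fun \<phi> K (1 / t) y}" if "y \<in> Kt \<phi> K (\<sigma> / t)" for y
    using hmap_fun_mem_Kt(1)[OF assms(1) \<open>\<sigma> / t > 1\<close> \<open>0 < 1 / t\<close> \<open>1 / t < \<sigma> / t\<close> that]
    unfolding hmap_fun_def by (rule hmap_eq_singleton)
  show "homeomorphism (Kt \<phi> K \<sigma>) (Kt \<phi> K (\<sigma> / t)) (hmap_fun \<phi> K t) (hmap_fun \<phi> K (1 / t))"
    by (rule homeomorphism_hmap_fun[OF assms(1,3-6)])
qed

end
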